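(* Let $\hat{A}\in\{0,1\}^{n\times n}$ be symmetric with exactly $m$ non-zero entries and no zero row, $d_i=\sum_j\hat{A}_{ij}$. Let $\overline{F}_1,\dots,\overline{F}_\gamma\in\mathbb{R}^{n\times n}$ be symmetric block matrices, where $\overline{F}_t$ is constant on each block $B\times B'$ with $B,B'$ parts of a partition $\mathcal{B}_t$ of $V=\{1,\dots,n\}$. Let $b$ be the greatest lower bound (common refinement) of $\mathcal{B}_1,\dots,\mathcal{B}_\gamma$, i.e. the partition whose parts are the nonempty intersections $P_1\cap\dots\cap P_\gamma$ with $P_t\in\mathcal{B}_t$, and let $|b|$ be its number of parts. Set $c_t=\sum_{a,b'}(\overline{F}_t)_{ab'}\hat{A}_{ab'}$ and $$L(\lambda_1,\dots,\lambda_n,\mu_1,\dots,\mu_\gamma)=\sum_{a,b'}\log\Bigl(1+\exp\bigl(\lambda_a+\textstyle\sum_{t=1}^\gamma\mu_t(\overline{F}_t)_{ab'}\bigr)\Bigr)-\sum_a d_a\lambda_a-\sum_{t=1}^\gamma c_t\mu_t .$$ Let $W$ be the subspace of parameter vectors with $\lambda_a=\lambda_{a'}$ whenever $a,a'$ lie in the same part of $b$ and $d_a=d_{a'}$. Then $\dim W\le\sqrt{2|b|m}+\gamma$, $\inf_W L=\inf L$, and every minimizer of $L$ on $W$ is a global minimizer of $L$.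
   Context: This is the MaxEnt Lagrange dual with one constraint per node degree (feature matrix with ones in row $a$, multiplier $\lambda_a$) and one global constraint per block-approximated feature matrix $\overline{F}_t$ (multiplier $\mu_t$). A partition $\mathcal{B}$ refines $\mathcal{B}'$ if each part of $\mathcal{B}$ is contained in a part of $\mathcal{B}'$; the greatest lower bound of a set of partitions is their coarsest common refinement. *)

theory Defs
  imports "HOL-Analysis.Analysis" "HOL-Library.Disjoint_Sets" "HOL-Library.Function_Algebras"
begin

text \<open>Vertices are 0..n-1. A parameter vector of the dual is encoded as x :: nat => real,
  with lambda_a = x a (a < n), mu_t = x (n + t) (t < gamma), and x i = 0 for i >= n + gamma.\<close>

definition param_space :: "nat \<Rightarrow> nat \<Rightarrow> (nat \<Rightarrow> real) set" where
  "param_space n \<gamma> = {x. \<forall>i\<ge>n + \<gamma>. x i = 0}"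

definition pscale :: "real \<Rightarrow> (nat \<Rightarrow> real) \<Rightarrow> (nat \<Rightarrow> real)" where
  "pscale r x = (\<lambda>i. r * x i)"

definition pdim :: "(nat \<Rightarrow> real) set \<Rightarrow> nat" where
  "pdim W = vector_space.dim pscale W"

definition meet_partition :: "nat \<Rightarrow> nat \<Rightarrow> (nat \<Rightarrow> nat set set) \<Rightarrow> nat set set" where
  "meet_partition n \<gamma> Bs =
     {X. X \<noteq> {} \<and> (\<exists>P. (\<forall>t<\<gamma>. P t \<in> Bs t) \<and> X = {..<n} \<inter> (\<Inter>t\<in>{..<\<gamma>}. P t))}"

definition block_constant :: "nat set set \<Rightarrow> (nat \<Rightarrow> nat \<Rightarrow> real) \<Rightarrow> bool" where
  "block_constant Bt M \<longleftrightarrow>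
     (\<forall>B\<in>Bt. \<forall>B'\<in>Bt. \<forall>a\<in>B. \<forall>a'\<in>B. \<forall>c\<in>B'. \<forall>c'\<in>B'. M a c = M a' c')"

definition degree :: "nat \<Rightarrow> (nat \<Rightarrow> nat \<Rightarrow> real) \<Rightarrow> nat \<Rightarrow> real" where
  "degree n A i = (\<Sum>j<n. A i j)"

definition nnz :: "nat \<Rightarrow> (nat \<Rightarrow> nat \<Rightarrow> real) \<Rightarrow> nat" where
  "nnz n A = card {(i, j). i < n \<and> j < n \<and> A i j \<noteq> 0}"

definition dualL :: "nat \<Rightarrow> nat \<Rightarrow> (nat \<Rightarrow> nat \<Rightarrow> real) \<Rightarrow> (nat \<Rightarrow> nat \<Rightarrow> nat \<Rightarrow> real)
                      \<Rightarrow> (nat \<Rightarrow> real) \<Rightarrow> real" where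
  "dualL n \<gamma> A F x =
     (\<Sum>a<n. \<Sum>b<n. ln (1 + exp (x a + (\<Sum>t<\<gamma>. x (n + t) * F t a b))))
     - (\<Sum>a<n. degree n A a * x a)
     - (\<Sum>t<\<gamma>. (\<Sum>a<n. \<Sum>b<n. F t a b * A a b) * x (n + t))"

definition Wsub :: "nat \<Rightarrow> nat \<Rightarrow> (nat \<Rightarrow> nat \<Rightarrow> real) \<Rightarrow> nat set set \<Rightarrow> (nat \<Rightarrow> real) set" where
  "Wsub n \<gamma> A b = {x \<in> param_space n \<gamma>.
      \<forall>a<n. \<forall>a'<n. (\<exists>X\<in>b. a \<in> X \<and> a' \<in> X) \<and> degree n A a = degree n A a' \<longrightarrow> x a = x a'}"

end

theory Submission
  imports Defs
begin

text \<open>Averaging \<open>\<lambda>\<close> over each class of vertices lying in a common part of \<open>b\<close> and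
  having the same degree maps every parameter vector into \<open>W\<close> without increasing \<open>L\<close>.
  The term \<open>\<Sum>a. d\<^sub>a \<lambda>\<^sub>a\<close> is unchanged since degrees are constant on classes; and since every
  row of every \<open>F\<^sub>t\<close> is constant on the parts of \<open>b\<close>, the exponents of the convex softplus
  terms differ within a class only through \<open>\<lambda>\<^sub>a\<close>, so Jensen's inequality applies class by
  class. Hence \<open>L\<close> has the same infimum on \<open>W\<close>, and minimizers on \<open>W\<close> are global.

  \<open>W\<close> is spanned by the indicator vectors of the classes and the \<open>\<gamma>\<close> coordinate vectors
  of \<open>\<mu>\<close>. A part of \<open>b\<close> meeting \<open>k\<close> distinct degrees has degree sum at least
  \<open>1 + \<dots> + k\<close> (degrees are positive), so the squares of these numbers \<open>k\<close> sum to at most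
  \<open>2m\<close>, and Cauchy-Schwarz bounds the number of classes by \<open>sqrt (2 |b| m)\<close>.\<close>

lemma convex_on_softplus_shift: "convex_on UNIV (\<lambda>s::real. ln (1 + exp (s + c)))"
proof (rule convex_on_realI)
  show "connected (UNIV :: real set)" by simp
  show "((\<lambda>s. ln (1 + exp (s + c))) has_real_derivative exp (s + c) / (1 + exp (s + c))) (at s)"
    for s :: real
    by (auto intro!: derivative_eq_intros simp: add_pos_pos)
  show "exp (x + c) / (1 + exp (x + c)) \<le> exp (y + c) / (1 + exp (y + c))"
    if "x \<le> y" for x y :: real
  proof -
    have "exp (x + c) \<le> exp (y + c)" using that by simp
    then show ?thesis by (simp add: divide_simps add_pos_pos algebra_simps)
  qed
qed

lemma convex_on_mean_le:
  fixes f :: "real \<Rightarrow> real"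
  assumes "convex_on UNIV f" "finite C" "C \<noteq> {}"
  shows "f ((\<Sum>i\<in>C. y i) / card C) \<le> (\<Sum>i\<in>C. f (y i)) / card C"
proof -
  have "f (\<Sum>i\<in>C. (1 / card C) *\<^sub>R y i) \<le> (\<Sum>i\<in>C. (1 / card C) * f (y i))"
    using assms by (intro convex_on_sum) auto
  then show ?thesis
    by (simp add: sum_divide_distrib)
qed

lemma INF_eq_if_dominated:
  fixes f :: "'a \<Rightarrow> 'b::complete_lattice"
  assumes "W \<subseteq> S" and "\<And>x. x \<in> S \<Longrightarrow> \<exists>y\<in>W. f y \<le> f x"
  shows "(INF x\<in>W. f x) = (INF x\<in>S. f x)"
proof (rule antisym)
  show "(INF x\<in>W. f x) \<le> (INF x\<in>S. f x)" using assms(2) by (rule INF_mono)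
  show "(INF x\<in>S. f x) \<le> (INF x\<in>W. f x)" using assms(1) by (rule INF_superset_mono) simp
qed

lemma card_times_Suc_card_le_sum:
  fixes S :: "nat set"
  assumes "finite S" "0 \<notin> S"
  shows "card S * Suc (card S) \<le> 2 * \<Sum>S"
  using assms
proof (induction "card S" arbitrary: S)
  case 0
  then show ?case by simp
next
  case (Suc k)
  define m where "m = Max S"
  have "S \<noteq> {}" using Suc.hyps(2) by auto
  then have m: "m \<in> S" unfolding m_def using Suc.prems(1) by simp
  have "S \<subseteq> {1..m}"
    using Suc.prems unfolding m_def by (auto simp: Suc_le_eq intro: gr0I)
  then have "card S \<le> m" using card_mono[of "{1..m}" S] by simp
  moreover have "card (S - {m}) = k" using Suc.hyps(2) m by simp
  moreover have "card (S - {m}) * Suc (card (S - {m})) \<le> 2 * \<Sum>(S - {m})"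
    using Suc.hyps(1)[of "S - {m}"] Suc.prems \<open>card (S - {m}) = k\<close> by auto
  moreover have "\<Sum>S = m + \<Sum>(S - {m})" using Suc.prems(1) m by (simp add: sum.remove)
  ultimately show ?case using Suc.hyps(2)[symmetric] by (simp add: algebra_simps)
qed

definition class_mean :: "'a rel \<Rightarrow> ('a \<Rightarrow> real) \<Rightarrow> 'a \<Rightarrow> real" where
  "class_mean r x a = (\<Sum>a'\<in>r``{a}. x a') / card (r``{a})"

lemma class_mean_in_quotient:
  assumes r: "equiv I r" and "C \<in> I // r" "a \<in> C"
  shows "class_mean r x a = (\<Sum>a'\<in>C. x a') / card C"
proof -
  obtain c where "C = r``{c}" using \<open>C \<in> I // r\<close> by (rule quotientE)
  then have "r``{a} = C" using equiv_class_eq[OF r] \<open>a \<in> C\<close> by simp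
  then show ?thesis by (simp add: class_mean_def)
qed

lemma sum_convex_class_mean_le:
  fixes f :: "'a \<Rightarrow> real \<Rightarrow> real"
  assumes r: "equiv I r" and "finite I"
    and convex: "\<And>a. a \<in> I \<Longrightarrow> convex_on UNIV (f a)"
    and resp: "\<And>a a'. (a, a') \<in> r \<Longrightarrow> f a = f a'"
  shows "(\<Sum>a\<in>I. f a (class_mean r x a)) \<le> (\<Sum>a\<in>I. f a (x a))"
proof -
  have "(\<Sum>a\<in>C. f a (class_mean r x a)) \<le> (\<Sum>a\<in>C. f a (x a))" if C: "C \<in> I // r" for C
  proof -
    have fin: "finite C" "C \<noteq> {}"
      using finite_equiv_class[OF \<open>finite I\<close> equiv_type[OF r] C] in_quotient_imp_non_empty[OF r C]
      by auto
    then obtain c where "c \<in> C" by blast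
    have f_eq: "f a = f c" if "a \<in> C" for a
      using resp in_quotient_imp_in_rel[OF r C] \<open>c \<in> C\<close> that by blast
    have "(\<Sum>a\<in>C. f a (class_mean r x a)) = card C * f c ((\<Sum>a\<in>C. x a) / card C)"
      using f_eq class_mean_in_quotient[OF r C] by simp
    also have "\<dots> \<le> (\<Sum>a\<in>C. f c (x a))"
      using convex_on_mean_le[OF convex fin, of c x] in_quotient_imp_subset[OF r C] \<open>c \<in> C\<close> fin
      by (auto simp: pos_le_divide_eq card_gt_0_iff mult.commute)
    also have "\<dots> = (\<Sum>a\<in>C. f a (x a))"
      using f_eq by simp
    finally show ?thesis .
  qed
  then show ?thesis
    unfolding sum.partition[OF \<open>finite I\<close> partition_on_quotient[OF r]] by (rule sum_mono)
qed

lemma sum_mult_class_mean: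
  assumes r: "equiv I r" and "finite I"
    and resp: "\<And>a a'. (a, a') \<in> r \<Longrightarrow> g a = g a'"
  shows "(\<Sum>a\<in>I. g a * class_mean r x a) = (\<Sum>a\<in>I. g a * x a)"
proof -
  have "(\<Sum>a\<in>C. g a * class_mean r x a) = (\<Sum>a\<in>C. g a * x a)" if C: "C \<in> I // r" for C
  proof -
    have fin: "finite C" "C \<noteq> {}"
      using finite_equiv_class[OF \<open>finite I\<close> equiv_type[OF r] C] in_quotient_imp_non_empty[OF r C]
      by auto
    then obtain c where "c \<in> C" by blast
    have g_eq: "g a = g c" if "a \<in> C" for a
      using resp in_quotient_imp_in_rel[OF r C] \<open>c \<in> C\<close> that by blast
    have "(\<Sum>a\<in>C. g a * class_mean r x a) = card C * (g c * ((\<Sum>a\<in>C. x a) / card C))"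
      using g_eq class_mean_in_quotient[OF r C] by simp
    also have "\<dots> = g c * (\<Sum>a\<in>C. x a)"
      using fin by (simp add: card_gt_0_iff)
    also have "\<dots> = (\<Sum>a\<in>C. g a * x a)"
      using g_eq by (simp add: sum_distrib_left)
    finally show ?thesis .
  qed
  then show ?thesis
    unfolding sum.partition[OF \<open>finite I\<close> partition_on_quotient[OF r]] by (rule sum.cong[OF refl])
qed

definition refine_by :: "'a set set \<Rightarrow> ('a \<Rightarrow> 'b) \<Rightarrow> 'a rel" where
  "refine_by P g = {(a, a'). \<exists>X\<in>P. a \<in> X \<and> a' \<in> X \<and> g a = g a'}"

lemma refine_by_Image:
  assumes P: "partition_on I P" and "X \<in> P" "a \<in> X"
  shows "refine_by P g `` {a} = {a' \<in> X. g a' = g a}"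
proof (intro equalityI subsetI)
  fix a' assume "a' \<in> refine_by P g `` {a}"
  then obtain Y where "Y \<in> P" "a \<in> Y" "a' \<in> Y" "g a = g a'" unfolding refine_by_def by blast
  moreover have "Y = X" using disjointD[OF partition_onD2[OF P]] \<open>Y \<in> P\<close> \<open>a \<in> Y\<close> assms(2,3) by blast
  ultimately show "a' \<in> {a' \<in> X. g a' = g a}" by simp
qed (use assms(2,3) in \<open>auto simp: refine_by_def\<close>)

lemma equiv_refine_by:
  assumes P: "partition_on I P"
  shows "equiv I (refine_by P g)"
proof (rule equivI)
  show "refine_by P g \<subseteq> I \<times> I"
  proof
    fix p assume "p \<in> refine_by P g"
    then obtain X a a' where "p = (a, a')" "X \<in> P" "a \<in> X" "a' \<in> X"
      unfolding refine_by_def by blast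
    then show "p \<in> I \<times> I" using partition_onD1[OF P] by blast
  qed
  show "refl_on I (refine_by P g)"
  proof (rule refl_onI)
    fix a assume "a \<in> I"
    then obtain X where "X \<in> P" "a \<in> X" using partition_onD1[OF P] by blast
    then show "(a, a) \<in> refine_by P g" unfolding refine_by_def by blast
  qed
  show "sym (refine_by P g)"
  proof (rule symI)
    fix a b assume "(a, b) \<in> refine_by P g"
    then obtain X where "X \<in> P" "a \<in> X" "b \<in> X" "g a = g b"
      unfolding refine_by_def by blast
    then show "(b, a) \<in> refine_by P g"
      unfolding refine_by_def by auto
  qed
  show "trans (refine_by P g)"
  proof (rule transI)
    fix a b c assume ab: "(a, b) \<in> refine_by P g" and bc: "(b, c) \<in> refine_by P g"
    obtain X where X: "X \<in> P" "a \<in> X" "b \<in> X" "g a = g b"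
      using ab unfolding refine_by_def by blast
    have "c \<in> refine_by P g `` {b}" using bc by simp
    then have "c \<in> X" "g c = g b" unfolding refine_by_Image[OF P X(1,3)] by auto
    then show "(a, c) \<in> refine_by P g"
      using X unfolding refine_by_def by auto
  qed
qed

lemma card_quotient_refine_by_le:
  assumes P: "partition_on I P" and "finite I"
  shows "card (I // refine_by P g) \<le> (\<Sum>X\<in>P. card (g ` X))"
proof -
  let ?part = "\<lambda>(X, k). {a \<in> X. g a = k}"
  have fin: "finite P" "\<And>X. X \<in> P \<Longrightarrow> finite X"
    using \<open>finite I\<close> partition_onD1[OF P] by (metis Union_upper finite_UnionD finite_subset)+
  then have fin_Sigma: "finite (Sigma P (\<lambda>X. g ` X))" by auto
  have "I // refine_by P g \<subseteq> ?part ` Sigma P (\<lambda>X. g ` X)"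
  proof
    fix C assume "C \<in> I // refine_by P g"
    then obtain a where "a \<in> I" "C = refine_by P g `` {a}" by (rule quotientE)
    moreover obtain X where "X \<in> P" "a \<in> X" using partition_onD1[OF P] \<open>a \<in> I\<close> by blast
    ultimately have "C = ?part (X, g a)" "(X, g a) \<in> Sigma P (\<lambda>X. g ` X)"
      using refine_by_Image[OF P] by auto
    then show "C \<in> ?part ` Sigma P (\<lambda>X. g ` X)" by (rule image_eqI)
  qed
  then have "card (I // refine_by P g) \<le> card (?part ` Sigma P (\<lambda>X. g ` X))"
    using fin_Sigma by (intro card_mono) auto
  also have "\<dots> \<le> card (Sigma P (\<lambda>X. g ` X))"
    using fin_Sigma by (rule card_image_le)
  also have "\<dots> = (\<Sum>X\<in>P. card (g ` X))" using fin by (simp add: card_SigmaI)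
  finally show ?thesis .
qed

lemma sum_card_image_le_sqrt:
  fixes g :: "'a \<Rightarrow> nat"
  assumes P: "partition_on I P" and "finite I" and pos: "\<And>a. a \<in> I \<Longrightarrow> 0 < g a"
  shows "real (\<Sum>X\<in>P. card (g ` X)) \<le> sqrt (2 * real (card P) * real (\<Sum>a\<in>I. g a))"
proof -
  have fin: "\<And>X. X \<in> P \<Longrightarrow> finite X"
    using \<open>finite I\<close> partition_onD1[OF P] by (metis Union_upper finite_subset)
  have sq: "(real (card (g ` X)))\<^sup>2 \<le> 2 * real (\<Sum>a\<in>X. g a)" if X: "X \<in> P" for X
  proof -
    have "0 \<notin> g ` X" using pos partition_onD1[OF P] X by fastforce
    then have "card (g ` X) * Suc (card (g ` X)) \<le> 2 * \<Sum>(g ` X)"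
      using fin[OF X] by (intro card_times_Suc_card_le_sum) auto
    moreover have "\<Sum>(g ` X) \<le> (\<Sum>a\<in>X. g a)"
      using sum_image_le[of X "\<lambda>k. k" g] fin[OF X] by simp
    ultimately have "card (g ` X) ^ 2 \<le> 2 * (\<Sum>a\<in>X. g a)" by (simp add: power2_eq_square)
    then show ?thesis by (metis of_nat_le_iff of_nat_mult of_nat_numeral of_nat_power)
  qed
  have "(real (\<Sum>X\<in>P. card (g ` X)))\<^sup>2 = (\<Sum>X\<in>P. real (card (g ` X)) * 1)\<^sup>2" by simp
  also have "\<dots> \<le> (\<Sum>X\<in>P. (real (card (g ` X)))\<^sup>2) * (\<Sum>X\<in>P. 1\<^sup>2)"
    by (rule Cauchy_Schwarz_ineq_sum)
  also have "\<dots> \<le> (\<Sum>X\<in>P. 2 * real (\<Sum>a\<in>X. g a)) * card P"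
    using sq by (simp add: mult_right_mono sum_mono)
  also have "(\<Sum>X\<in>P. 2 * real (\<Sum>a\<in>X. g a)) = 2 * real (\<Sum>a\<in>I. g a)"
    using sum.partition[OF \<open>finite I\<close> P, of g] by (simp add: sum_distrib_left)
  finally have "(real (\<Sum>X\<in>P. card (g ` X)))\<^sup>2 \<le> 2 * real (card P) * real (\<Sum>a\<in>I. g a)"
    by (simp only: ac_simps)
  then show ?thesis by (rule real_le_rsqrt)
qed

lemma partition_on_meet_partition:
  assumes Bs: "\<And>t. t < \<gamma> \<Longrightarrow> partition_on {..<n} (Bs t)"
  shows "partition_on {..<n} (meet_partition n \<gamma> Bs)"
proof (rule partition_onI)
  show "\<Union>(meet_partition n \<gamma> Bs) = {..<n}"
  proof (intro equalityI subsetI)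
    fix a assume "a \<in> \<Union>(meet_partition n \<gamma> Bs)"
    then show "a \<in> {..<n}" unfolding meet_partition_def by auto
  next
    fix a assume a: "a \<in> {..<n}"
    have "\<exists>B. B \<in> Bs t \<and> a \<in> B" if "t < \<gamma>" for t
      using partition_onD1[OF Bs[OF that]] a by auto
    then obtain P where P: "\<And>t. t < \<gamma> \<Longrightarrow> P t \<in> Bs t \<and> a \<in> P t" by metis
    define X where "X = {..<n} \<inter> (\<Inter>t\<in>{..<\<gamma>}. P t)"
    have "a \<in> X" using a P by (auto simp: X_def)
    moreover have "X \<in> meet_partition n \<gamma> Bs"
      unfolding meet_partition_def mem_Collect_eq
      using P \<open>a \<in> X\<close> by (intro conjI exI[of _ P]) (auto simp: X_def)
    ultimately show "a \<in> \<Union>(meet_partition n \<gamma> Bs)" by blast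
  qed
next
  fix X Y assume "X \<in> meet_partition n \<gamma> Bs" "Y \<in> meet_partition n \<gamma> Bs" "X \<noteq> Y"
  then obtain P Q where P: "\<forall>t<\<gamma>. P t \<in> Bs t" "X = {..<n} \<inter> (\<Inter>t\<in>{..<\<gamma>}. P t)"
    and Q: "\<forall>t<\<gamma>. Q t \<in> Bs t" "Y = {..<n} \<inter> (\<Inter>t\<in>{..<\<gamma>}. Q t)"
    unfolding meet_partition_def by blast
  show "disjnt X Y"
  proof (rule ccontr)
    assume "\<not> disjnt X Y"
    then obtain a where "a \<in> X" "a \<in> Y" by (auto simp: disjnt_def)
    have "P t = Q t" if "t < \<gamma>" for t
    proof (rule ccontr)
      assume "P t \<noteq> Q t"
      moreover have "a \<in> P t" "a \<in> Q t" using \<open>a \<in> X\<close> \<open>a \<in> Y\<close> P(2) Q(2) that by auto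
      ultimately show False
        using disjointD[OF partition_onD2[OF Bs[OF that]], of "P t" "Q t"] P(1) Q(1) that by auto
    qed
    then have "X = Y" unfolding P(2) Q(2) by auto
    with \<open>X \<noteq> Y\<close> show False ..
  qed
next
  show "{} \<notin> meet_partition n \<gamma> Bs" unfolding meet_partition_def by blast
qed

lemma block_constant_meet_partition:
  assumes "partition_on {..<n} (Bs t)" "block_constant (Bs t) M" "t < \<gamma>"
    and "X \<in> meet_partition n \<gamma> Bs" "a \<in> X" "a' \<in> X" "c < n"
  shows "M a c = M a' c"
proof -
  obtain P where "\<forall>t<\<gamma>. P t \<in> Bs t" "X = {..<n} \<inter> (\<Inter>t\<in>{..<\<gamma>}. P t)"
    using assms(4) unfolding meet_partition_def by blast
  then have "P t \<in> Bs t" "a \<in> P t" "a' \<in> P t" using assms(3,5,6) by auto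
  moreover obtain B where "B \<in> Bs t" "c \<in> B"
    using partition_onD1[OF assms(1)] assms(7) by blast
  ultimately show ?thesis using assms(2) unfolding block_constant_def by blast
qed

definition row_nnz :: "nat \<Rightarrow> (nat \<Rightarrow> nat \<Rightarrow> real) \<Rightarrow> nat \<Rightarrow> nat" where
  "row_nnz n A a = card {j. j < n \<and> A a j \<noteq> 0}"

lemma degree_eq_row_nnz:
  assumes "\<forall>j<n. A a j = 0 \<or> A a j = 1"
  shows "degree n A a = real (row_nnz n A a)"
proof -
  have "degree n A a = (\<Sum>j\<in>{..<n}. if A a j \<noteq> 0 then 1 else 0)"
    unfolding degree_def using assms by (intro sum.cong) auto
  also have "\<dots> = real (card ({..<n} \<inter> {j. A a j \<noteq> 0}))"
    by (simp add: sum.If_cases)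
  also have "{..<n} \<inter> {j. A a j \<noteq> 0} = {j. j < n \<and> A a j \<noteq> 0}" by auto
  finally show ?thesis unfolding row_nnz_def .
qed

lemma nnz_eq_sum_row_nnz: "nnz n A = (\<Sum>a<n. row_nnz n A a)"
proof -
  have "{(i, j). i < n \<and> j < n \<and> A i j \<noteq> 0} = Sigma {..<n} (\<lambda>i. {j. j < n \<and> A i j \<noteq> 0})"
    by auto
  then show ?thesis unfolding nnz_def row_nnz_def by (simp add: card_SigmaI)
qed

lemma Wsub_respects_refine_by:
  assumes P: "partition_on {..<n} P"
    and "x \<in> Wsub n \<gamma> A P" "(a, a') \<in> refine_by P (degree n A)"
  shows "x a = x a'"
proof -
  obtain X where X: "X \<in> P" "a \<in> X" "a' \<in> X" "degree n A a = degree n A a'"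
    using assms(3) unfolding refine_by_def by blast
  moreover have "a < n" "a' < n" using partition_onD1[OF P] X by auto
  ultimately show ?thesis using assms(2) unfolding Wsub_def by blast
qed

definition average_lambda :: "nat \<Rightarrow> nat rel \<Rightarrow> (nat \<Rightarrow> real) \<Rightarrow> nat \<Rightarrow> real" where
  "average_lambda n r x i = (if i < n then class_mean r x i else x i)"

lemma average_lambda_mem_Wsub:
  assumes P: "partition_on {..<n} P" and x: "x \<in> param_space n \<gamma>"
  shows "average_lambda n (refine_by P (degree n A)) x \<in> Wsub n \<gamma> A P"
  unfolding Wsub_def mem_Collect_eq
proof (intro conjI allI impI)
  let ?r = "refine_by P (degree n A)"
  show "average_lambda n ?r x \<in> param_space n \<gamma>"
    using x by (simp add: param_space_def average_lambda_def)
  fix a a' assume "a < n" "a' < n"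
    and "(\<exists>X\<in>P. a \<in> X \<and> a' \<in> X) \<and> degree n A a = degree n A a'"
  then have "(a, a') \<in> ?r" unfolding refine_by_def by blast
  then have "?r``{a} = ?r``{a'}" using equiv_class_eq[OF equiv_refine_by[OF P]] by blast
  then show "average_lambda n ?r x a = average_lambda n ?r x a'"
    using \<open>a < n\<close> \<open>a' < n\<close> by (simp add: average_lambda_def class_mean_def)
qed

lemma dualL_average_lambda_le:
  assumes r: "equiv {..<n} r"
    and deg: "\<And>a a'. (a, a') \<in> r \<Longrightarrow> degree n A a = degree n A a'"
    and F: "\<And>a a' t c. (a, a') \<in> r \<Longrightarrow> t < \<gamma> \<Longrightarrow> c < n \<Longrightarrow> F t a c = F t a' c"
  shows "dualL n \<gamma> A F (average_lambda n r x) \<le> dualL n \<gamma> A F x"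
proof -
  define s where "s a c = (\<Sum>t<\<gamma>. x (n + t) * F t a c)" for a c
  define M where "M = (\<Sum>t<\<gamma>. (\<Sum>a<n. \<Sum>b<n. F t a b * A a b) * x (n + t))"
  have L: "dualL n \<gamma> A F y =
      (\<Sum>c<n. \<Sum>a<n. ln (1 + exp (y a + s a c))) - (\<Sum>a<n. degree n A a * y a) - M"
    if "\<And>t. y (n + t) = x (n + t)" for y
    unfolding dualL_def s_def M_def that by (subst sum.swap) simp
  have softplus: "(\<Sum>a<n. ln (1 + exp (class_mean r x a + s a c)))
      \<le> (\<Sum>a<n. ln (1 + exp (x a + s a c)))" if "c < n" for c
    using r convex_on_softplus_shift
    by (intro sum_convex_class_mean_le) (auto simp: s_def F[OF _ _ that])
  have "dualL n \<gamma> A F (average_lambda n r x)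
      = (\<Sum>c<n. \<Sum>a<n. ln (1 + exp (class_mean r x a + s a c)))
        - (\<Sum>a<n. degree n A a * class_mean r x a) - M"
    by (subst L) (simp_all add: average_lambda_def)
  also have "(\<Sum>a<n. degree n A a * class_mean r x a) = (\<Sum>a<n. degree n A a * x a)"
    using r deg by (intro sum_mult_class_mean) auto
  also have "(\<Sum>c<n. \<Sum>a<n. ln (1 + exp (class_mean r x a + s a c)))
      \<le> (\<Sum>c<n. \<Sum>a<n. ln (1 + exp (x a + s a c)))"
    by (rule sum_mono) (simp add: softplus)
  finally show ?thesis by (simp add: L)
qed

lemma sum_fun_apply: "(\<Sum>a\<in>S. f a) i = (\<Sum>a\<in>S. f a i)"
  for f :: "'a \<Rightarrow> 'b \<Rightarrow> 'c::comm_monoid_add"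
  by (induction S rule: infinite_finite_induct) auto

lemma pdim_le_card_of_constant_on_parts:
  assumes "finite Q" "disjoint Q" and fin: "\<And>C. C \<in> Q \<Longrightarrow> finite C"
    and const: "\<And>x C a a'. x \<in> W \<Longrightarrow> C \<in> Q \<Longrightarrow> a \<in> C \<Longrightarrow> a' \<in> C \<Longrightarrow> x a = x a'"
    and zero: "\<And>x i. x \<in> W \<Longrightarrow> i \<notin> \<Union>Q \<Longrightarrow> x i = 0"
  shows "pdim W \<le> card Q"
proof -
  interpret V: vector_space pscale
    by unfold_locales (auto simp: pscale_def algebra_simps)
  have expand: "x = (\<Sum>C\<in>Q. pscale ((\<Sum>a\<in>C. x a) / card C) (indicator C))" if x: "x \<in> W" for x
  proof
    fix i
    have "(\<Sum>C\<in>Q. pscale ((\<Sum>a\<in>C. x a) / card C) (indicator C)) i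
        = (\<Sum>C\<in>Q. (\<Sum>a\<in>C. x a) / card C * indicator C i)"
      by (simp add: sum_fun_apply pscale_def)
    also have "\<dots> = x i"
    proof (cases "i \<in> \<Union>Q")
      case True
      then obtain C where C: "C \<in> Q" "i \<in> C" by blast
      have "indicator D i = (if D = C then 1 else 0 :: real)" if "D \<in> Q" for D
        using disjointD[OF \<open>disjoint Q\<close> that C(1)] C(2) by (auto simp: indicator_def)
      then have "(\<Sum>D\<in>Q. (\<Sum>a\<in>D. x a) / card D * indicator D i)
          = (\<Sum>D\<in>Q. if D = C then (\<Sum>a\<in>D. x a) / card D else 0)"
        by (intro sum.cong) auto
      also have "\<dots> = (\<Sum>a\<in>C. x a) / card C"
        using \<open>finite Q\<close> C(1) by (simp add: sum.delta)
      also have "(\<Sum>a\<in>C. x a) = card C * x i"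
        using const[OF x C(1) _ C(2)] by simp
      finally show ?thesis
        using fin[OF C(1)] C(2) by (auto simp: card_gt_0_iff)
    next
      case False
      then show ?thesis
        using zero[OF x False] by (auto simp: indicator_def intro!: sum.neutral)
    qed
    finally show "x i = (\<Sum>C\<in>Q. pscale ((\<Sum>a\<in>C. x a) / card C) (indicator C)) i" by simp
  qed
  have "W \<subseteq> V.span (indicator ` Q)"
  proof
    fix x assume "x \<in> W"
    have "(\<Sum>C\<in>Q. pscale ((\<Sum>a\<in>C. x a) / card C) (indicator C)) \<in> V.span (indicator ` Q)"
      by (intro V.span_sum V.span_scale V.span_base imageI)
    then show "x \<in> V.span (indicator ` Q)" using expand[OF \<open>x \<in> W\<close>] by simp
  qed
  then have "pdim W \<le> card (indicator ` Q :: (nat \<Rightarrow> real) set)"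
    unfolding pdim_def using \<open>finite Q\<close> by (intro V.dim_le_card) auto
  also have "\<dots> \<le> card Q" using \<open>finite Q\<close> by (rule card_image_le)
  finally show ?thesis .
qed

lemma pdim_Wsub_le:
  assumes P: "partition_on {..<n} P"
  shows "pdim (Wsub n \<gamma> A P) \<le> card ({..<n} // refine_by P (degree n A)) + \<gamma>"
proof -
  let ?r = "refine_by P (degree n A)"
  let ?Q = "{..<n} // ?r \<union> (\<lambda>t. {n + t}) ` {..<\<gamma>}"
  have r: "equiv {..<n} ?r" using P by (rule equiv_refine_by)
  have classes: "partition_on {..<n} ({..<n} // ?r)" using r by (rule partition_on_quotient)
  have "pdim (Wsub n \<gamma> A P) \<le> card ?Q"
  proof (rule pdim_le_card_of_constant_on_parts)
    show "finite ?Q" using finite_quotient[OF finite_lessThan equiv_type[OF r]] by simp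
    show "disjoint ?Q"
    proof (rule disjoint_union)
      show "disjoint ({..<n} // ?r)" using partition_onD2[OF classes] .
      show "disjoint ((\<lambda>t. {n + t}) ` {..<\<gamma>})" by (auto simp: disjoint_def)
      show "\<Union>({..<n} // ?r) \<inter> \<Union>((\<lambda>t. {n + t}) ` {..<\<gamma>}) = {}"
        using partition_onD1[OF classes] by auto
    qed
    show "finite C" if "C \<in> ?Q" for C
      using that in_quotient_imp_subset[OF r] finite_subset by blast
    show "x a = x a'" if "x \<in> Wsub n \<gamma> A P" "C \<in> ?Q" "a \<in> C" "a' \<in> C" for x C a a'
      using that in_quotient_imp_in_rel[OF r] Wsub_respects_refine_by[OF P] by blast
    show "x i = 0" if x: "x \<in> Wsub n \<gamma> A P" and i: "i \<notin> \<Union>?Q" for x i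
    proof -
      have "n + \<gamma> \<le> i"
      proof (rule ccontr)
        assume "\<not> n + \<gamma> \<le> i"
        then have "i \<in> \<Union>({..<n} // ?r) \<or> {i} \<in> (\<lambda>t. {n + t}) ` {..<\<gamma>}"
          using partition_onD1[OF classes] by (cases "i < n") (auto intro!: image_eqI[of _ _ "i - n"])
        with i show False by blast
      qed
      then show ?thesis using x unfolding Wsub_def param_space_def by blast
    qed
  qed
  also have "card ?Q \<le> card ({..<n} // ?r) + \<gamma>"
    using card_Un_le[of "{..<n} // ?r" "(\<lambda>t. {n + t}) ` {..<\<gamma>}"]
      card_image_le[of "{..<\<gamma>}" "\<lambda>t. {n + t}"] by simp
  finally show ?thesis .
qed

lemma pdim_Wsub_le_sqrt:
  assumes A01: "\<forall>i<n. \<forall>j<n. A i j = 0 \<or> A i j = 1"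
    and nonzero_row: "\<forall>i<n. \<exists>j<n. A i j \<noteq> 0"
    and P: "partition_on {..<n} P"
  shows "real (pdim (Wsub n \<gamma> A P)) \<le> sqrt (2 * real (card P) * real (nnz n A)) + real \<gamma>"
proof -
  have card_degrees: "card (degree n A ` X) = card (row_nnz n A ` X)" if "X \<in> P" for X
  proof -
    have "X \<subseteq> {..<n}" using partition_onD1[OF P] that by blast
    then have "degree n A ` X = real ` row_nnz n A ` X"
      unfolding image_image using A01 by (intro image_cong refl degree_eq_row_nnz) auto
    then show ?thesis by (simp add: card_image)
  qed
  have "0 < row_nnz n A a" if a: "a \<in> {..<n}" for a
  proof -
    obtain j where "j < n" "A a j \<noteq> 0" using nonzero_row a by auto
    then show ?thesis by (auto simp: row_nnz_def card_gt_0_iff)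
  qed
  then have "real (\<Sum>X\<in>P. card (row_nnz n A ` X)) \<le> sqrt (2 * real (card P) * real (nnz n A))"
    using sum_card_image_le_sqrt[OF P] by (simp add: nnz_eq_sum_row_nnz)
  moreover have "card ({..<n} // refine_by P (degree n A)) \<le> (\<Sum>X\<in>P. card (row_nnz n A ` X))"
    using card_quotient_refine_by_le[OF P, of "degree n A"] card_degrees by simp
  ultimately show ?thesis
    using pdim_Wsub_le[OF P, of \<gamma> A] by linarith
qed

lemma dualL_dominated_on_Wsub:
  assumes Bs_part: "\<forall>t<\<gamma>. partition_on {..<n} (Bs t)"
    and F_block: "\<forall>t<\<gamma>. block_constant (Bs t) (F t)"
    and x: "x \<in> param_space n \<gamma>"
  shows "\<exists>y\<in>Wsub n \<gamma> A (meet_partition n \<gamma> Bs). dualL n \<gamma> A F y \<le> dualL n \<gamma> A F x"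
proof
  let ?b = "meet_partition n \<gamma> Bs"
  let ?r = "refine_by ?b (degree n A)"
  have b: "partition_on {..<n} ?b"
    using Bs_part by (intro partition_on_meet_partition) auto
  show "average_lambda n ?r x \<in> Wsub n \<gamma> A ?b"
    using b x by (rule average_lambda_mem_Wsub)
  show "dualL n \<gamma> A F (average_lambda n ?r x) \<le> dualL n \<gamma> A F x"
  proof (rule dualL_average_lambda_le)
    show "equiv {..<n} ?r" using b by (rule equiv_refine_by)
  next
    fix a a' assume "(a, a') \<in> ?r"
    then show "degree n A a = degree n A a'" unfolding refine_by_def by blast
  next
    fix a a' t c assume "(a, a') \<in> ?r" "t < \<gamma>" "c < n"
    then obtain X where "X \<in> ?b" "a \<in> X" "a' \<in> X" unfolding refine_by_def by blast
    then show "F t a c = F t a' c"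
      using block_constant_meet_partition[of n Bs t "F t" \<gamma> X a a' c] Bs_part F_block
        \<open>t < \<gamma>\<close> \<open>c < n\<close> by blast
  qed
qed

theorem mainTheorem3:
  fixes n \<gamma> :: nat
    and A :: "nat \<Rightarrow> nat \<Rightarrow> real"
    and F :: "nat \<Rightarrow> nat \<Rightarrow> nat \<Rightarrow> real"
    and Bs :: "nat \<Rightarrow> nat set set"
  assumes A01: "\<forall>i<n. \<forall>j<n. A i j = 0 \<or> A i j = 1"
    and A_sym: "\<forall>i<n. \<forall>j<n. A i j = A j i"
    and A_nozero_row: "\<forall>i<n. \<exists>j<n. A i j \<noteq> 0"
    and F_sym: "\<forall>t<\<gamma>. \<forall>a<n. \<forall>c<n. F t a c = F t c a"
    and Bs_part: "\<forall>t<\<gamma>. partition_on {..<n} (Bs t)"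
    and F_block: "\<forall>t<\<gamma>. block_constant (Bs t) (F t)"
  shows "(real (pdim (Wsub n \<gamma> A (meet_partition n \<gamma> Bs)))
           \<le> sqrt (2 * real (card (meet_partition n \<gamma> Bs)) * real (nnz n A)) + real \<gamma>)
       \<and> ((INF x\<in>Wsub n \<gamma> A (meet_partition n \<gamma> Bs). ereal (dualL n \<gamma> A F x))
           = (INF x\<in>param_space n \<gamma>. ereal (dualL n \<gamma> A F x)))
       \<and> (\<forall>x\<in>Wsub n \<gamma> A (meet_partition n \<gamma> Bs).
           (\<forall>y\<in>Wsub n \<gamma> A (meet_partition n \<gamma> Bs). dualL n \<gamma> A F x \<le> dualL n \<gamma> A F y)
           \<longrightarrow> (\<forall>y\<in>param_space n \<gamma>. dualL n \<gamma> A F x \<le> dualL n \<gamma> A F y))"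
proof -
  let ?W = "Wsub n \<gamma> A (meet_partition n \<gamma> Bs)"
  have dominated: "\<exists>y\<in>?W. dualL n \<gamma> A F y \<le> dualL n \<gamma> A F x" if "x \<in> param_space n \<gamma>" for x
    using Bs_part F_block that by (rule dualL_dominated_on_Wsub)
  have W_sub: "?W \<subseteq> param_space n \<gamma>" unfolding Wsub_def by blast
  show ?thesis
  proof (intro conjI ballI impI)
    show "real (pdim ?W) \<le> sqrt (2 * real (card (meet_partition n \<gamma> Bs)) * real (nnz n A)) + real \<gamma>"
      using A01 A_nozero_row Bs_part
      by (intro pdim_Wsub_le_sqrt partition_on_meet_partition) auto
    show "(INF x\<in>?W. ereal (dualL n \<gamma> A F x)) = (INF x\<in>param_space n \<gamma>. ereal (dualL n \<gamma> A F x))"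
    proof (rule INF_eq_if_dominated[OF W_sub])
      fix x assume "x \<in> param_space n \<gamma>"
      then show "\<exists>y\<in>?W. ereal (dualL n \<gamma> A F y) \<le> ereal (dualL n \<gamma> A F x)"
        using dominated by auto
    qed
  next
    fix x y assume "\<forall>y\<in>?W. dualL n \<gamma> A F x \<le> dualL n \<gamma> A F y" "y \<in> param_space n \<gamma>"
    then show "dualL n \<gamma> A F x \<le> dualL n \<gamma> A F y"
      using dominated by (meson order_trans)
  qed
qed

end
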